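(* There is an algorithm which, given $\delta\in(0,1)$ and a sequence of $m$ events, produces non-decreasing estimates $v_t$ (for $t=1,\dots,m$) of the number $t$ of events seen so far such that, for any fixed $t\in[m]$, with probability at least $1-\delta$, $$\frac{\delta}{12\log m}\,t\le v_t\le\frac1\delta\,t.$$ The algorithm uses $O(\log\log m)$ bits of space. *)

theory Defs
  imports "HOL-Probability.Probability_Mass_Function"
begin

text \<open>A streaming counting algorithm is modelled as an initial memory state s0,
  a randomized transition step (applied once per event, with fresh randomness,
  not knowing the time index), and an output map out from memory states to
  estimates.\<close>

fun traj :: "'s \<Rightarrow> ('s \<Rightarrow> 's pmf) \<Rightarrow> nat \<Rightarrow> 's list pmf" where
  "traj s0 step 0 = return_pmf [s0]"
| "traj s0 step (Suc n) =
     bind_pmf (traj s0 step n) (\<lambda>xs. map_pmf (\<lambda>s'. xs @ [s']) (step (last xs)))"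

definition space_bounded :: "real \<Rightarrow> bool list \<Rightarrow> (bool list \<Rightarrow> bool list pmf) \<Rightarrow> bool" where
  "space_bounded b s0 step \<longleftrightarrow>
     real (length s0) \<le> b \<and>
     (\<forall>s. real (length s) \<le> b \<longrightarrow> (\<forall>s'\<in>set_pmf (step s). real (length s') \<le> b))"

end

theory Submission
  imports Defs
begin

(* Morris' approximate counter keeps a counter X, increments it with probability 2^-X and
  outputs 2^X/4. After t events E[2^X] <= t + 1, and a_t = E[2^-X] satisfies
  a_(t+1) <= a_t - a_t^2/2 (by Jensen), whence a_t <= 2/(t + 2). Markov's inequality applied to
  2^X and to 2^-X bounds the probability of over- and of underestimation by delta/2 each.
  Capping X at K = 2^L - 1 with 4m <= 2^K never hurts, and then the state fits into
  L = O(log log m) bits. For small m an exact unary counter does the job. *)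

lemma length_traj: "xs \<in> set_pmf (traj s0 step n) \<Longrightarrow> length xs = Suc n"
  by (induction n arbitrary: xs) auto

lemma map_last_traj_Suc:
  "map_pmf last (traj s0 step (Suc n)) = map_pmf last (traj s0 step n) \<bind> step"
  by (simp add: map_bind_pmf bind_map_pmf pmf.map_comp o_def)

lemma map_nth_traj:
  assumes "t \<le> n"
  shows "map_pmf (\<lambda>xs. xs ! t) (traj s0 step n) = map_pmf last (traj s0 step t)"
  using assms
proof (induction n)
  case 0
  then show ?case by simp
next
  case (Suc n)
  show ?case
  proof (cases "t = Suc n")
    case True
    then show ?thesis
      by (intro map_pmf_cong) (auto dest!: length_traj simp: nth_append)
  next
    case False
    with Suc have "t \<le> n" by simp
    have "map_pmf (\<lambda>xs. xs ! t) (traj s0 step (Suc n)) = map_pmf (\<lambda>xs. xs ! t) (traj s0 step n)"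
      unfolding traj.simps map_bind_pmf map_pmf_def[of _ "traj s0 step n"]
      using \<open>t \<le> n\<close>
      by (intro bind_pmf_cong refl) (auto dest!: length_traj simp: pmf.map_comp o_def nth_append map_pmf_const)
    with Suc.IH[OF \<open>t \<le> n\<close>] show ?thesis by simp
  qed
qed

lemma map_traj_simulation:
  assumes "\<And>s. map_pmf f (step s) = g (f s)"
  shows "map_pmf (map f) (traj s0 step n) = traj (f s0) g n"
proof (induction n)
  case 0
  then show ?case by simp
next
  case (Suc n)
  have "map_pmf (map f) (traj s0 step (Suc n))
      = traj s0 step n \<bind> (\<lambda>xs. map_pmf (\<lambda>k. map f xs @ [k]) (g (last (map f xs))))"
    unfolding traj.simps map_bind_pmf
  proof (intro bind_pmf_cong refl)
    fix xs assume "xs \<in> set_pmf (traj s0 step n)"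
    then have "xs \<noteq> []" by (auto dest: length_traj)
    then show "map_pmf (map f) (map_pmf (\<lambda>s'. xs @ [s']) (step (last xs)))
        = map_pmf (\<lambda>k. map f xs @ [k]) (g (last (map f xs)))"
      by (simp add: pmf.map_comp o_def last_map flip: assms)
  qed
  also have "\<dots> = traj (f s0) g (Suc n)"
    by (simp add: bind_map_pmf flip: Suc)
  finally show ?case .
qed

lemma map_nth_traj_simulation:
  assumes "\<And>s. map_pmf f (step s) = g (f s)" and "t \<le> n"
  shows "map_pmf (\<lambda>xs. f (xs ! t)) (traj s0 step n) = map_pmf last (traj (f s0) g t)"
proof -
  have "map_pmf (\<lambda>xs. f (xs ! t)) (traj s0 step n) = map_pmf (\<lambda>ys. ys ! t) (map_pmf (map f) (traj s0 step n))"
    unfolding pmf.map_comp o_def using assms(2) by (intro map_pmf_cong) (auto dest: length_traj)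
  then show ?thesis
    by (simp add: map_traj_simulation[where g = g, OF assms(1)] map_nth_traj[OF assms(2)])
qed

lemma sorted_traj:
  fixes f :: "'s \<Rightarrow> 'b::linorder"
  assumes mono: "\<And>s s'. s' \<in> set_pmf (step s) \<Longrightarrow> f s \<le> f s'"
    and xs: "xs \<in> set_pmf (traj s0 step n)"
  shows "sorted (map f xs)"
  using xs
proof (induction n arbitrary: xs)
  case 0
  then show ?case by simp
next
  case (Suc n)
  then obtain ys s' where ys: "ys \<in> set_pmf (traj s0 step n)" and s': "s' \<in> set_pmf (step (last ys))"
    and xs: "xs = ys @ [s']" by auto
  have sorted_ys: "sorted (map f ys)" and "ys \<noteq> []"
    using Suc.IH[OF ys] length_traj[OF ys] by auto
  then have "f y \<le> f (last ys)" if "y \<in> set ys" for y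
    using that by (auto simp: sorted_iff_nth_mono in_set_conv_nth last_conv_nth)
  with mono[OF s'] sorted_ys show ?case
    by (auto simp: xs sorted_append intro: order_trans)
qed

lemma traj_deterministic:
  "traj s0 (\<lambda>s. return_pmf (f s)) n = return_pmf (map (\<lambda>i. (f ^^ i) s0) [0..<Suc n])"
  by (induction n) (simp_all add: bind_return_pmf)

lemma expectation_bind_pmf_finite:
  fixes h :: "'b \<Rightarrow> real"
  assumes "finite (set_pmf p)" "\<And>x. x \<in> set_pmf p \<Longrightarrow> finite (set_pmf (f x))"
  shows "measure_pmf.expectation (p \<bind> f) h = measure_pmf.expectation p (\<lambda>x. measure_pmf.expectation (f x) h)"
  using assms
  by (simp add: pmf_expectation_bind[of "set_pmf p"] integral_measure_pmf_real[of "set_pmf p"] mult.commute)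

lemma square_expectation_le_expectation_square:
  fixes f :: "'a \<Rightarrow> real"
  assumes "finite (set_pmf p)"
  shows "(measure_pmf.expectation p f)^2 \<le> measure_pmf.expectation p (\<lambda>x. (f x)^2)"
  using measure_pmf.variance_positive[of p f] measure_pmf.variance_eq[of p f]
  by (simp add: integrable_measure_pmf_finite[OF assms])

definition morris_step :: "nat \<Rightarrow> nat \<Rightarrow> nat pmf" where
  "morris_step K k =
     (if k < K then map_pmf (\<lambda>b. if b then Suc k else k) (bernoulli_pmf (1 / 2 ^ k)) else return_pmf k)"

definition morris_count :: "nat \<Rightarrow> nat \<Rightarrow> nat pmf" where
  "morris_count K t = map_pmf last (traj 0 (morris_step K) t)"

lemma set_morris_step: "set_pmf (morris_step K k) \<subseteq> {k, Suc k}"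
  by (auto simp: morris_step_def)

lemma morris_step_le_cap: "k \<le> K \<Longrightarrow> k' \<in> set_pmf (morris_step K k) \<Longrightarrow> k' \<le> K"
  by (auto simp: morris_step_def split: if_splits)

lemma morris_count_Suc: "morris_count K (Suc t) = morris_count K t \<bind> morris_step K"
  unfolding morris_count_def by (rule map_last_traj_Suc)

lemma set_morris_count: "set_pmf (morris_count K t) \<subseteq> {..K}"
proof (induction t)
  case 0
  then show ?case by (simp add: morris_count_def)
next
  case (Suc t)
  then show ?case by (auto simp: morris_count_Suc dest: morris_step_le_cap)
qed

lemma finite_set_morris_count: "finite (set_pmf (morris_count K t))"
  using set_morris_count finite_subset by blast

lemma expectation_morris_count_mono_step:
  fixes h g :: "nat \<Rightarrow> real"
  assumes "\<And>k. measure_pmf.expectation (morris_step K k) h \<le> g k"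
  shows "measure_pmf.expectation (morris_count K (Suc t)) h \<le> measure_pmf.expectation (morris_count K t) g"
proof -
  have "measure_pmf.expectation (morris_count K (Suc t)) h
      = measure_pmf.expectation (morris_count K t) (\<lambda>k. measure_pmf.expectation (morris_step K k) h)"
    unfolding morris_count_Suc
    by (intro expectation_bind_pmf_finite finite_set_morris_count finite_subset[OF set_morris_step]) simp
  also have "\<dots> \<le> measure_pmf.expectation (morris_count K t) g"
    by (intro integral_mono integrable_measure_pmf_finite finite_set_morris_count assms)
  finally show ?thesis .
qed

lemma expectation_morris_step_pow2: "measure_pmf.expectation (morris_step K k) (\<lambda>j. (2::real) ^ j) \<le> 2 ^ k + 1"
  by (auto simp: morris_step_def field_simps)

lemma expectation_morris_count_pow2:
  "measure_pmf.expectation (morris_count K t) (\<lambda>k. (2::real) ^ k) \<le> real t + 1"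
proof (induction t)
  case 0
  then show ?case by (simp add: morris_count_def)
next
  case (Suc t)
  have "measure_pmf.expectation (morris_count K (Suc t)) (\<lambda>k. (2::real) ^ k)
      \<le> measure_pmf.expectation (morris_count K t) (\<lambda>k. 2 ^ k + 1)"
    by (rule expectation_morris_count_mono_step[OF expectation_morris_step_pow2])
  also have "\<dots> = measure_pmf.expectation (morris_count K t) (\<lambda>k. 2 ^ k) + 1"
    by (simp add: integrable_measure_pmf_finite finite_set_morris_count)
  finally show ?case using Suc by simp
qed

(* Saturated states get weight 0: they never move, which would spoil the contraction in
  expectation_morris_step_inv, and a saturated counter cannot underestimate anyway. *)
definition morris_inv :: "nat \<Rightarrow> nat \<Rightarrow> real" where
  "morris_inv K k = (if k < K then 1 / 2 ^ k else 0)"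

lemma expectation_morris_step_inv:
  "measure_pmf.expectation (morris_step K k) (morris_inv K) \<le> morris_inv K k - (morris_inv K k)^2 / 2"
proof -
  consider "Suc k < K" | "Suc k = K" | "K \<le> k" by linarith
  then show ?thesis
    by cases (auto simp: morris_step_def morris_inv_def field_simps power2_eq_square)
qed

lemma quadratic_recurrence_bound:
  fixes a :: "nat \<Rightarrow> real"
  assumes nonneg: "\<And>t. 0 \<le> a t" and "a 0 \<le> 1" and rec: "\<And>t. a (Suc t) \<le> a t - (a t)^2 / 2"
  shows "a t \<le> 2 / (real t + 2)"
proof (induction t)
  case 0
  then show ?case using \<open>a 0 \<le> 1\<close> by simp
next
  case (Suc t)
  define b where "b = 2 / (real t + 2)"
  have "b \<le> 1" by (simp add: b_def)
  \<comment> \<open>\<open>x \<mapsto> x - x\<^sup>2/2\<close> is increasing on \<open>[0, 1]\<close>\<close>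
  have "0 \<le> (b - a t) * (2 - (a t + b))"
    using nonneg[of t] Suc[folded b_def] \<open>b \<le> 1\<close> by (intro mult_nonneg_nonneg) linarith+
  then have "a t - (a t)^2 / 2 \<le> b - b^2 / 2"
    by (simp add: algebra_simps power2_eq_square)
  also have "\<dots> = 2 * (real t + 1) / (real t + 2)^2"
    by (simp add: b_def diff_divide_distrib power2_eq_square divide_simps)
  also have "\<dots> \<le> 2 / (real (Suc t) + 2)"
    by (simp add: divide_simps power2_eq_square algebra_simps add_pos_nonneg)
  finally show ?case using rec[of t] by linarith
qed

lemma expectation_morris_count_inv:
  "measure_pmf.expectation (morris_count K t) (morris_inv K) \<le> 2 / (real t + 2)"
proof (rule quadratic_recurrence_bound[where a = "\<lambda>t. measure_pmf.expectation (morris_count K t) (morris_inv K)"])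
  show "0 \<le> measure_pmf.expectation (morris_count K t) (morris_inv K)" for t
    by (simp add: integral_nonneg_AE morris_inv_def)
  show "measure_pmf.expectation (morris_count K 0) (morris_inv K) \<le> 1"
    by (simp add: morris_count_def morris_inv_def)
  fix t
  have "measure_pmf.expectation (morris_count K (Suc t)) (morris_inv K)
      \<le> measure_pmf.expectation (morris_count K t) (\<lambda>k. morris_inv K k - (morris_inv K k)^2 / 2)"
    by (rule expectation_morris_count_mono_step[OF expectation_morris_step_inv])
  also have "\<dots> = measure_pmf.expectation (morris_count K t) (morris_inv K)
      - measure_pmf.expectation (morris_count K t) (\<lambda>k. (morris_inv K k)^2) / 2"
    by (simp add: integrable_measure_pmf_finite finite_set_morris_count)
  also have "\<dots> \<le> measure_pmf.expectation (morris_count K t) (morris_inv K)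
      - (measure_pmf.expectation (morris_count K t) (morris_inv K))^2 / 2"
    using square_expectation_le_expectation_square[OF finite_set_morris_count] by simp
  finally show "measure_pmf.expectation (morris_count K (Suc t)) (morris_inv K)
      \<le> measure_pmf.expectation (morris_count K t) (morris_inv K)
      - (measure_pmf.expectation (morris_count K t) (morris_inv K))^2 / 2" .
qed

lemma markov_inequality_pmf:
  fixes f :: "'a \<Rightarrow> real"
  assumes "finite (set_pmf p)" "\<And>x. 0 \<le> f x" "0 < c"
  shows "measure_pmf.prob p {x. c \<le> f x} \<le> measure_pmf.expectation p f / c"
  using integral_Markov_inequality_measure[of p f UNIV c] assms integrable_measure_pmf_finite[OF assms(1)]
  by auto

lemma morris_upper_tail:
  assumes "0 < c"
  shows "measure_pmf.prob (morris_count K t) {k. c \<le> 2 ^ k} \<le> (real t + 1) / c"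
proof -
  have "measure_pmf.prob (morris_count K t) {k. c \<le> 2 ^ k}
      \<le> measure_pmf.expectation (morris_count K t) (\<lambda>k. 2 ^ k) / c"
    using assms by (intro markov_inequality_pmf finite_set_morris_count) auto
  also have "\<dots> \<le> (real t + 1) / c"
    using assms expectation_morris_count_pow2 by (intro divide_right_mono) auto
  finally show ?thesis .
qed

lemma morris_lower_tail:
  assumes "0 < c"
  shows "measure_pmf.prob (morris_count K t) {k. k < K \<and> 2 ^ k \<le> c} \<le> 2 * c / (real t + 2)"
proof -
  have "measure_pmf.prob (morris_count K t) {k. k < K \<and> 2 ^ k \<le> c}
      \<le> measure_pmf.prob (morris_count K t) {k. 1 / c \<le> morris_inv K k}"
    using assms by (intro measure_pmf.finite_measure_mono) (auto simp: morris_inv_def field_simps)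
  also have "\<dots> \<le> measure_pmf.expectation (morris_count K t) (morris_inv K) / (1 / c)"
    using assms by (intro markov_inequality_pmf finite_set_morris_count) (auto simp: morris_inv_def)
  also have "\<dots> \<le> (2 / (real t + 2)) / (1 / c)"
    using assms expectation_morris_count_inv by (intro divide_right_mono) auto
  finally show ?thesis by simp
qed

lemma morris_count_accurate:
  fixes \<delta> :: real
  assumes \<delta>: "0 < \<delta>" "\<delta> < 1" and t: "1 \<le> t" "t \<le> m"
    and cap: "4 * real m \<le> 2 ^ K" and log_m: "4 / 3 \<le> log 2 m"
  shows "1 - \<delta> \<le> measure_pmf.prob (morris_count K t)
           {k. \<delta> / (12 * log 2 m) * real t \<le> 2 ^ k / 4 \<and> 2 ^ k / 4 \<le> real t / \<delta>}"
    (is "_ \<le> measure_pmf.prob ?p ?good")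
proof -
  define L where "L = log 2 m"
  have "L > 0" unfolding L_def using log_m by linarith
  have "real t > 0" using t by simp
  define too_high where "too_high = {k. 4 * real t / \<delta> \<le> (2::real) ^ k}"
  define too_low where "too_low = {k. k < K \<and> (2::real) ^ k \<le> \<delta> * real t / (3 * L)}"
  have "UNIV - ?good \<subseteq> too_high \<union> too_low"
  proof
    fix k assume "k \<in> UNIV - ?good"
    moreover have "k < K" if "2 ^ k / 4 < \<delta> / (12 * L) * real t"
    proof -
      have "\<delta> / (12 * L) \<le> 1"
        using \<delta> log_m \<open>L > 0\<close> by (simp add: L_def field_simps)
      then have "\<delta> / (12 * L) * real t \<le> real m"
        using t mult_right_mono[of "\<delta> / (12 * L)" 1 "real t"] by simp
      then have "(2::real) ^ k < 2 ^ K" using that cap by linarith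
      then show ?thesis by simp
    qed
    ultimately show "k \<in> too_high \<union> too_low"
      using \<delta> \<open>L > 0\<close> by (auto simp: too_high_def too_low_def L_def field_simps not_le)
  qed
  then have "measure_pmf.prob ?p (UNIV - ?good) \<le> measure_pmf.prob ?p too_high + measure_pmf.prob ?p too_low"
    by (intro order_trans[OF measure_pmf.finite_measure_mono measure_Un_le]) auto
  moreover have "measure_pmf.prob ?p too_high \<le> \<delta> / 2"
  proof -
    have "measure_pmf.prob ?p too_high \<le> (real t + 1) / (4 * real t / \<delta>)"
      unfolding too_high_def using \<delta> \<open>real t > 0\<close> by (intro morris_upper_tail) auto
    also have "\<dots> \<le> \<delta> / 2"
      using \<delta> t by (simp add: field_simps)
    finally show ?thesis .
  qed
  moreover have "measure_pmf.prob ?p too_low \<le> \<delta> / 2"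
  proof -
    have "measure_pmf.prob ?p too_low \<le> 2 * (\<delta> * real t / (3 * L)) / (real t + 2)"
      unfolding too_low_def using \<delta> \<open>real t > 0\<close> \<open>L > 0\<close> by (intro morris_lower_tail) auto
    also have "\<dots> = 2 * \<delta> / (3 * L) * (real t / (real t + 2))"
      by simp
    also have "\<dots> \<le> 2 * \<delta> / (3 * L)"
      using \<delta> \<open>L > 0\<close> by (intro mult_left_le) auto
    also have "\<dots> \<le> \<delta> / 2"
      using \<delta> log_m by (simp add: L_def field_simps)
    finally show ?thesis .
  qed
  ultimately show ?thesis
    using measure_pmf.prob_compl[of ?good ?p] by (simp add: L_def)
qed

definition bits_of :: "nat \<Rightarrow> nat \<Rightarrow> bool list" where
  "bits_of L k = map (bit k) [0..<L]"

(* The cap makes every bit string decode to a valid counter state, so the bit-level transition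
  simulates morris_step from every state, not only from the reachable ones. *)
definition capped_value :: "nat \<Rightarrow> bool list \<Rightarrow> nat" where
  "capped_value K s = min K (horner_sum of_bool 2 s)"

lemma capped_value_bits_of:
  assumes "k \<le> K" "K < 2 ^ L"
  shows "capped_value K (bits_of L k) = k"
proof -
  have "k < 2 ^ L" using assms by linarith
  with assms(1) show ?thesis
    by (simp add: capped_value_def bits_of_def horner_sum_bit_eq_take_bit take_bit_nat_eq_self)
qed

lemma ln_ln_bound:
  fixes x :: real
  assumes "27 \<le> x"
  shows "log 2 (log 2 x + 3) + 1 \<le> 6 * ln (ln x)"
proof -
  define y where "y = ln x"
  have "exp (3::real) = exp 1 ^ 3"
    by (simp flip: exp_of_nat_mult)
  also have "\<dots> \<le> 3 ^ 3"
    by (intro power_mono exp_le) simp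
  finally have "3 \<le> y"
    using assms unfolding y_def by (subst ln_ge_iff) auto
  then have "1 \<le> ln y"
    using exp_le by (subst ln_ge_iff) auto
  have "ln (1/2::real) \<le> 1/2 - 1"
    by (rule ln_le_minus_one) simp
  then have ln2: "1/2 \<le> ln (2::real)"
    by (simp add: ln_div)
  have "0 \<le> log 2 x"
    using assms by simp
  have "log 2 x \<le> 2 * y"
    using ln2 \<open>3 \<le> y\<close> by (simp add: log_def y_def divide_le_eq)
  also have "2 * y \<le> y^2 - 3"
  proof -
    have "0 \<le> (y - 3) * (y + 1)" using \<open>3 \<le> y\<close> by simp
    then show ?thesis by (simp add: algebra_simps power2_eq_square)
  qed
  finally have "log 2 (log 2 x + 3) \<le> log 2 (y^2)"
    using \<open>0 \<le> log 2 x\<close> by (intro log_mono) auto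
  also have "\<dots> = 2 * ln y / ln 2"
    using \<open>3 \<le> y\<close> by (simp add: log_def ln_realpow)
  also have "\<dots> \<le> 4 * ln y"
    using ln2 \<open>1 \<le> ln y\<close> by (simp add: divide_le_eq)
  finally show ?thesis
    using \<open>1 \<le> ln y\<close> by (simp add: y_def)
qed

lemma bit_budget:
  assumes "27 \<le> m"
  shows "\<exists>L. 4 * real m \<le> 2 ^ (2 ^ L - 1) \<and> real L \<le> 6 * ln (ln (real m))"
proof -
  define L where "L = nat \<lceil>log 2 (log 2 (real m) + 3)\<rceil>"
  have "3 \<le> log 2 (real m)"
    using assms by (subst le_log_iff) (auto simp: powr_numeral)
  have "log 2 (real m) + 3 = 2 powr log 2 (log 2 (real m) + 3)"
    using \<open>3 \<le> log 2 (real m)\<close> by simp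
  also have "\<dots> \<le> 2 powr real L"
    unfolding L_def by (intro powr_mono real_nat_ceiling_ge) simp
  also have "\<dots> = 2 ^ L"
    by (simp add: powr_realpow)
  finally have "log 2 (real m) + 2 \<le> real (2 ^ L - 1)"
    by (simp add: of_nat_diff)
  then have "2 powr (log 2 (real m) + 2) \<le> 2 ^ (2 ^ L - 1)"
    by (simp add: powr_realpow[symmetric] powr_mono)
  then have "4 * real m \<le> 2 ^ (2 ^ L - 1)"
    using assms by (simp add: powr_add)
  moreover have "real L \<le> log 2 (log 2 (real m) + 3) + 1"
    using \<open>3 \<le> log 2 (real m)\<close> of_int_ceiling_le_add_one unfolding L_def by (simp add: of_nat_nat)
  then have "real L \<le> 6 * ln (ln (real m))"
    using ln_ln_bound[of "real m"] assms by simp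
  ultimately show ?thesis by blast
qed

definition monotone_estimates :: "nat \<Rightarrow> 's \<Rightarrow> ('s \<Rightarrow> 's pmf) \<Rightarrow> ('s \<Rightarrow> real) \<Rightarrow> bool" where
  "monotone_estimates m s0 step out \<longleftrightarrow>
     (\<forall>xs\<in>set_pmf (traj s0 step m). \<forall>i j. 1 \<le> i \<and> i \<le> j \<and> j \<le> m \<longrightarrow> out (xs ! i) \<le> out (xs ! j))"

definition accurate_estimates :: "real \<Rightarrow> nat \<Rightarrow> 's \<Rightarrow> ('s \<Rightarrow> 's pmf) \<Rightarrow> ('s \<Rightarrow> real) \<Rightarrow> bool" where
  "accurate_estimates \<delta> m s0 step out \<longleftrightarrow>
     (\<forall>t\<in>{1..m}. measure_pmf.prob (traj s0 step m)
        {xs. \<delta> / (12 * log 2 (real m)) * real t \<le> out (xs ! t) \<and> out (xs ! t) \<le> real t / \<delta>} \<ge> 1 - \<delta>)"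

lemma monotone_estimatesI:
  assumes "\<And>s s'. s' \<in> set_pmf (step s) \<Longrightarrow> out s \<le> out s'"
  shows "monotone_estimates m s0 step out"
  unfolding monotone_estimates_def
  using sorted_traj[OF assms] length_traj by (fastforce simp: sorted_iff_nth_mono)

lemma exact_counter:
  assumes "0 < \<delta>" "\<delta> < 1" "1 \<le> m"
  shows "monotone_estimates m [] (\<lambda>s. return_pmf (True # s)) (\<lambda>s. real (length s))
       \<and> accurate_estimates \<delta> m [] (\<lambda>s. return_pmf (True # s)) (\<lambda>s. real (length s))"
proof
  show "monotone_estimates m [] (\<lambda>s. return_pmf (True # s)) (\<lambda>s. real (length s))"
    by (rule monotone_estimatesI) simp
  have scale: "\<delta> / (12 * log 2 (real m)) \<le> 1"
  proof (cases "m = 1")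
    case False
    then have "1 \<le> log 2 (real m)" using assms by simp
    then have "\<delta> \<le> 12 * log 2 (real m)" using assms by linarith
    then show ?thesis using \<open>1 \<le> log 2 (real m)\<close> by (simp add: pos_divide_le_eq)
  qed simp
  have "\<delta> / (12 * log 2 (real m)) * real t \<le> real t" for t
    using mult_right_mono[OF scale, of "real t"] by simp
  moreover have "real t \<le> real t / \<delta>" for t
    using assms by (simp add: le_divide_eq mult_left_le)
  moreover have "length ((Cons True ^^ i) []) = i" for i
    by (induction i) simp_all
  ultimately show "accurate_estimates \<delta> m [] (\<lambda>s. return_pmf (True # s)) (\<lambda>s. real (length s))"
    unfolding accurate_estimates_def traj_deterministic using assms by (auto simp del: upt_Suc)
qed

lemma morris_counter_algorithm:
  fixes \<delta> b :: real
  assumes \<delta>: "0 < \<delta>" "\<delta> < 1" and log_m: "4 / 3 \<le> log 2 (real m)"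
    and cap: "4 * real m \<le> 2 ^ (2 ^ L - 1)" and "real L \<le> b"
  shows "\<exists>s0 step out. monotone_estimates m s0 step out \<and> accurate_estimates \<delta> m s0 step out
           \<and> space_bounded b s0 step"
proof -
  define K where "K = 2 ^ L - (1::nat)"
  define step where "step s = map_pmf (bits_of L) (morris_step K (capped_value K s))" for s
  define out :: "bool list \<Rightarrow> real" where "out s = 2 ^ capped_value K s / 4" for s
  have "K < 2 ^ L"
    by (simp add: K_def)
  then have decode: "capped_value K (bits_of L k) = k" if "k \<le> K" for k
    using that by (intro capped_value_bits_of)
  have capped: "capped_value K s \<le> K" for s
    by (simp add: capped_value_def)
  have simulation: "map_pmf (capped_value K) (step s) = morris_step K (capped_value K s)" for s
    unfolding step_def pmf.map_comp o_def
    by (intro map_pmf_idI decode morris_step_le_cap[OF capped])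
  have "monotone_estimates m (bits_of L 0) step out"
  proof (rule monotone_estimatesI)
    fix s s' assume "s' \<in> set_pmf (step s)"
    then obtain k where "k \<in> set_pmf (morris_step K (capped_value K s))" and "s' = bits_of L k"
      by (auto simp: step_def)
    then have "capped_value K s \<le> capped_value K s'"
      using set_morris_step morris_step_le_cap[OF capped] decode by fastforce
    then show "out s \<le> out s'"
      by (simp add: out_def)
  qed
  moreover have "accurate_estimates \<delta> m (bits_of L 0) step out"
    unfolding accurate_estimates_def
  proof
    fix t assume t: "t \<in> {1..m}"
    have estimate_dist: "map_pmf (\<lambda>xs. capped_value K (xs ! t)) (traj (bits_of L 0) step m)
        = morris_count K t"
      using map_nth_traj_simulation[where g = "morris_step K", OF simulation] t
      by (simp add: decode morris_count_def)
    have "1 - \<delta> \<le> measure_pmf.prob (morris_count K t)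
        {k. \<delta> / (12 * log 2 (real m)) * real t \<le> 2 ^ k / 4 \<and> 2 ^ k / 4 \<le> real t / \<delta>}"
      using t \<delta> log_m cap by (intro morris_count_accurate) (auto simp: K_def)
    also have "\<dots> = measure_pmf.prob (traj (bits_of L 0) step m)
        {xs. \<delta> / (12 * log 2 (real m)) * real t \<le> out (xs ! t) \<and> out (xs ! t) \<le> real t / \<delta>}"
      unfolding estimate_dist[symmetric] by (simp add: out_def vimage_def)
    finally show "measure_pmf.prob (traj (bits_of L 0) step m)
        {xs. \<delta> / (12 * log 2 (real m)) * real t \<le> out (xs ! t) \<and> out (xs ! t) \<le> real t / \<delta>} \<ge> 1 - \<delta>" .
  qed
  moreover have "space_bounded b (bits_of L 0) step"
    using \<open>real L \<le> b\<close> by (auto simp: space_bounded_def step_def bits_of_def)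
  ultimately show ?thesis by blast
qed

lemma counter_algorithm_exists:
  fixes \<delta> :: real
  assumes \<delta>_m: "0 < \<delta>" "\<delta> < 1" "1 \<le> m"
  shows "\<exists>s0 step out. monotone_estimates m s0 step out \<and> accurate_estimates \<delta> m s0 step out
           \<and> (27 \<le> m \<longrightarrow> space_bounded (6 * ln (ln (real m))) s0 step)"
proof (cases "27 \<le> m")
  case True
  then obtain L where "4 * real m \<le> 2 ^ (2 ^ L - 1)" "real L \<le> 6 * ln (ln (real m))"
    using bit_budget by blast
  moreover have "3 \<le> log 2 (real m)"
    using True by (subst le_log_iff) (auto simp: powr_numeral)
  ultimately show ?thesis
    using morris_counter_algorithm[of \<delta> m] \<delta>_m by fastforce
next
  case False
  then show ?thesis
    using exact_counter \<delta>_m by blast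
qed

theorem lemma5p1:
  shows "\<exists>C::real. \<exists>M0::nat. \<forall>(\<delta>::real) (m::nat). 0 < \<delta> \<and> \<delta> < 1 \<and> 1 \<le> m \<longrightarrow>
    (\<exists>(s0::bool list) (step::bool list \<Rightarrow> bool list pmf) (out::bool list \<Rightarrow> real).
       (\<forall>xs\<in>set_pmf (traj s0 step m). \<forall>i j. 1 \<le> i \<and> i \<le> j \<and> j \<le> m \<longrightarrow> out (xs ! i) \<le> out (xs ! j))
     \<and> (\<forall>t\<in>{1..m}. measure_pmf.prob (traj s0 step m)
            {xs. \<delta> / (12 * log 2 (real m)) * real t \<le> out (xs ! t) \<and> out (xs ! t) \<le> real t / \<delta>}
          \<ge> 1 - \<delta>)
     \<and> (M0 \<le> m \<longrightarrow> space_bounded (C * ln (ln (real m))) s0 step))"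
  using counter_algorithm_exists
  unfolding monotone_estimates_def accurate_estimates_def
  by (intro exI[of _ 6] exI[of _ 27]) blast

end
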